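(* Let $G$ be a group generated by $n$ elements $x_1,\dots,x_n$ such that $[e]_g$ is a subgroup of $G$ for every $g\in G$. Then ${\rm wid}(\gamma_2(G))\le n-1$, and ${\rm wid}(\gamma_k(G))\le n^{k-2}(n-1)/2$ for every $k\ge 3$.
   Context: $[x,y]=x^{-1}y^{-1}xy$; $[e]_g=\{[x,g]\mid x\in G\}$. The lower central series is $\gamma_1(G)=G$, $\gamma_{k+1}(G)=[\gamma_k(G),G]$; $\gamma_k(G)$ is the verbal subgroup defined by the word $\gamma_k\in F_k$ given by $\gamma_1(x_1)=x_1$, $\gamma_{k+1}(x_1,\dots,x_{k+1})=[\gamma_k(x_1,\dots,x_k),x_{k+1}]$. For a word $w\in F_m$, $w(G)$ is the subgroup generated by all values $w(g_1,\dots,g_m)$, $g_i\in G$; for $g\in w(G)$, $l_w(g)$ is the least number of values $w(g_1,\dots,g_m)^{\pm1}$ whose product is $g$, and ${\rm wid}(w(G))=\sup_{g\in w(G)} l_w(g)$. Here ${\rm wid}(\gamma_k(G))$ is the width with respect to the word $\gamma_k$. *)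

theory Defs
  imports "HOL-Algebra.Algebra" "HOL-Library.Extended_Nat"
begin

definition comm :: "('a, 'b) monoid_scheme \<Rightarrow> 'a \<Rightarrow> 'a \<Rightarrow> 'a" where
  "comm G x y = inv\<^bsub>G\<^esub> x \<otimes>\<^bsub>G\<^esub> inv\<^bsub>G\<^esub> y \<otimes>\<^bsub>G\<^esub> x \<otimes>\<^bsub>G\<^esub> y"

definition comm_set :: "('a, 'b) monoid_scheme \<Rightarrow> 'a \<Rightarrow> 'a set" where
  "comm_set G g = {comm G x g | x. x \<in> carrier G}"

text \<open>Value of the word gamma_k at the arguments g 0, ..., g (k-1):
  gamma_1(x_1) = x_1, gamma_{k+1}(x_1..x_{k+1}) = [gamma_k(x_1..x_k), x_{k+1}].
  (k = 0 is not meaningful; it is given the dummy value 1.)\<close>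
fun gamma_val :: "('a, 'b) monoid_scheme \<Rightarrow> nat \<Rightarrow> (nat \<Rightarrow> 'a) \<Rightarrow> 'a" where
  "gamma_val G 0 g = \<one>\<^bsub>G\<^esub>"
| "gamma_val G (Suc 0) g = g 0"
| "gamma_val G (Suc (Suc k)) g = comm G (gamma_val G (Suc k) g) (g (Suc k))"

definition gamma_values :: "('a, 'b) monoid_scheme \<Rightarrow> nat \<Rightarrow> 'a set" where
  "gamma_values G k = {gamma_val G k g | g. \<forall>i<k. g i \<in> carrier G}"

definition gamma_subgroup :: "('a, 'b) monoid_scheme \<Rightarrow> nat \<Rightarrow> 'a set" where
  "gamma_subgroup G k = generate G (gamma_values G k)"

definition word_length :: "('a, 'b) monoid_scheme \<Rightarrow> 'a set \<Rightarrow> 'a \<Rightarrow> nat" where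
  "word_length G S x = (LEAST m. \<exists>xs. length xs = m \<and> set xs \<subseteq> S \<union> (\<lambda>y. inv\<^bsub>G\<^esub> y) ` S
       \<and> x = foldr (\<lambda>a b. a \<otimes>\<^bsub>G\<^esub> b) xs \<one>\<^bsub>G\<^esub>)"

definition width :: "('a, 'b) monoid_scheme \<Rightarrow> 'a set \<Rightarrow> enat" where
  "width G S = (SUP x \<in> generate G S. enat (word_length G S x))"

end

theory Submission
  imports Defs
begin

text \<open>If \<open>[e]_c\<close> is a subgroup then it is normal, because \<open>[y,c]^g = [yg,c] [g,c]^-1\<close>.
  For a finite set \<open>C\<close> the product of the normal subgroups \<open>[e]_c\<close>, \<open>c \<in> C\<close>, is
  then a normal subgroup \<open>M\<close> whose elements are products of at most \<open>|C|\<close> commutators \<open>[y,c]\<close>,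
  and if \<open>c\<close> is a value of \<open>\<gamma>_(k-1)\<close> each \<open>[y,c]\<close> is the inverse of a value of \<open>\<gamma>_k\<close>.
  So it suffices to choose \<open>C\<close> with \<open>\<gamma>_k(G) \<subseteq> M\<close>. For \<open>k = 2\<close> take
  \<open>C = {x_1, ..., x_(n-1)}\<close>: every \<open>[x_i,x_j]\<close> lies in \<open>M\<close>, hence so does every commutator.
  For \<open>k \<ge> 3\<close> take for \<open>C\<close> the \<open>n^(k-3) n(n-1)/2\<close> values
  \<open>\<gamma>_(k-1)(x_i, x_j, x_l1, ..., x_l(k-3))\<close> with \<open>i < j\<close>; peeling off the tail one generator
  at a time shows \<open>[x_i,x_j] \<in> \<zeta>_(k-2)(G/M)\<close>, so all commutators lie there and
  \<open>\<gamma>_k(G/M) = 1\<close>.\<close>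

text \<open>\<open>upper_central_series_mod G M m\<close> is the preimage in \<open>G\<close> of the \<open>m\<close>-th term
  \<open>\<zeta>_m(G/M)\<close> of the upper central series of \<open>G/M\<close>.\<close>

fun upper_central_series_mod :: "('a, 'b) monoid_scheme \<Rightarrow> 'a set \<Rightarrow> nat \<Rightarrow> 'a set" where
  "upper_central_series_mod G M 0 = M"
| "upper_central_series_mod G M (Suc m) =
     {g \<in> carrier G. \<forall>h \<in> carrier G. comm G g h \<in> upper_central_series_mod G M m}"

lemma gamma_val_cong: "(\<And>i. i < k \<Longrightarrow> f i = g i) \<Longrightarrow> gamma_val G k f = gamma_val G k g"
  by (induction G k f rule: gamma_val.induct) simp_all

lemma gamma_val_upd_last:
  "gamma_val G (Suc (Suc k)) (g(Suc k := y)) = comm G (gamma_val G (Suc k) g) y"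
  by (simp add: gamma_val_cong[of "Suc k" "g(Suc k := y)" g])

definition gamma_list :: "('a, 'b) monoid_scheme \<Rightarrow> 'a list \<Rightarrow> 'a" where
  "gamma_list G as = gamma_val G (length as) ((!) as)"

lemma gamma_list_pair [simp]: "gamma_list G [a, b] = comm G a b"
  by (simp add: gamma_list_def)

lemma gamma_list_snoc:
  assumes "as \<noteq> []"
  shows "gamma_list G (as @ [b]) = comm G (gamma_list G as) b"
proof -
  obtain k where k: "length as = Suc k" using assms by (cases as) auto
  have "gamma_val G (Suc k) ((!) (as @ [b])) = gamma_val G (Suc k) ((!) as)"
    using k by (intro gamma_val_cong) (simp add: nth_append)
  then show ?thesis using k by (simp add: gamma_list_def nth_append)
qed

lemma card_ordered_pairs: "card {(i, j). i < j \<and> j < (n::nat)} = n * (n - 1) div 2"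
proof (induction n)
  case (Suc n)
  have split: "{(i, j). i < j \<and> j < Suc n} = {(i, j). i < j \<and> j < n} \<union> (\<lambda>i. (i, n)) ` {..<n}"
    by auto
  have "finite {(i, j). i < j \<and> j < n}"
    by (rule finite_subset[of _ "{..<n} \<times> {..<n}"]) auto
  then have "card {(i, j). i < j \<and> j < Suc n} = n * (n - 1) div 2 + n"
    unfolding split using Suc.IH by (subst card_Un_disjoint) (auto simp: card_image inj_on_def)
  also have "\<dots> = Suc n * (Suc n - 1) div 2"
    by (cases n) (simp_all add: algebra_simps)
  finally show ?case .
qed simp

lemma card_ordered_pairs_times_lists:
  "card ({(i, j). i < j \<and> j < n} \<times> {ls. set ls \<subseteq> {..<n} \<and> length ls = d}) =
    n ^ (d + 1) * (n - 1) div 2"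
proof -
  have "even (n * (n - 1))" by (cases "even n") auto
  then show ?thesis
    by (simp add: card_cartesian_product card_ordered_pairs card_lists_length_eq div_mult_swap mult_ac)
qed

context group begin

lemma mult_inv_cancel_left [simp]: "x \<in> carrier G \<Longrightarrow> y \<in> carrier G \<Longrightarrow> x \<otimes> (inv x \<otimes> y) = y"
  by (simp add: m_assoc [symmetric])

lemma inv_mult_cancel_left [simp]: "x \<in> carrier G \<Longrightarrow> y \<in> carrier G \<Longrightarrow> inv x \<otimes> (x \<otimes> y) = y"
  by (simp add: m_assoc [symmetric])

lemma comm_closed [simp]: "a \<in> carrier G \<Longrightarrow> b \<in> carrier G \<Longrightarrow> comm G a b \<in> carrier G"
  by (simp add: comm_def)

lemma inv_comm: "a \<in> carrier G \<Longrightarrow> b \<in> carrier G \<Longrightarrow> inv (comm G a b) = comm G b a"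
  by (simp add: comm_def m_assoc inv_mult_group)

lemma comm_self [simp]: "a \<in> carrier G \<Longrightarrow> comm G a a = \<one>"
  by (simp add: comm_def m_assoc)

lemma comm_one_left [simp]: "a \<in> carrier G \<Longrightarrow> comm G \<one> a = \<one>"
  by (simp add: comm_def m_assoc)

lemma comm_one_right [simp]: "a \<in> carrier G \<Longrightarrow> comm G a \<one> = \<one>"
  by (simp add: comm_def m_assoc)

lemma comm_mult_left:
  "a \<in> carrier G \<Longrightarrow> b \<in> carrier G \<Longrightarrow> h \<in> carrier G \<Longrightarrow>
    comm G (a \<otimes> b) h = inv b \<otimes> comm G a h \<otimes> b \<otimes> comm G b h"
  by (simp add: comm_def m_assoc inv_mult_group)

lemma comm_mult_right:
  "a \<in> carrier G \<Longrightarrow> h \<in> carrier G \<Longrightarrow> y \<in> carrier G \<Longrightarrow>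
    comm G a (h \<otimes> y) = comm G a y \<otimes> (inv y \<otimes> comm G a h \<otimes> y)"
  by (simp add: comm_def m_assoc inv_mult_group)

lemma comm_inv_left:
  "a \<in> carrier G \<Longrightarrow> h \<in> carrier G \<Longrightarrow> comm G (inv a) h = a \<otimes> inv (comm G a h) \<otimes> inv a"
  by (simp add: comm_def m_assoc inv_mult_group)

lemma comm_inv_right:
  "a \<in> carrier G \<Longrightarrow> h \<in> carrier G \<Longrightarrow> comm G a (inv h) = h \<otimes> inv (comm G a h) \<otimes> inv h"
  by (simp add: comm_def m_assoc inv_mult_group)

lemma comm_conj_left:
  "a \<in> carrier G \<Longrightarrow> g \<in> carrier G \<Longrightarrow> h \<in> carrier G \<Longrightarrow>
    comm G (g \<otimes> a \<otimes> inv g) h = g \<otimes> comm G a (inv g \<otimes> h \<otimes> g) \<otimes> inv g"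
  by (simp add: comm_def m_assoc inv_mult_group)

lemma normal_subgroupI:
  assumes "N \<subseteq> carrier G" "\<one> \<in> N"
    and "\<And>a b. a \<in> N \<Longrightarrow> b \<in> N \<Longrightarrow> a \<otimes> b \<in> N"
    and "\<And>a. a \<in> N \<Longrightarrow> inv a \<in> N"
    and "\<And>g a. g \<in> carrier G \<Longrightarrow> a \<in> N \<Longrightarrow> g \<otimes> a \<otimes> inv g \<in> N"
  shows "N \<lhd> G"
  using assms by (auto simp: normal_inv_iff intro!: subgroupI)

lemma comm_set_normal:
  assumes c: "c \<in> carrier G" and sub: "subgroup (comm_set G c) G"
  shows "comm_set G c \<lhd> G"
  unfolding normal_inv_iff
proof (intro conjI ballI sub)
  interpret subgroup "comm_set G c" G by (rule sub)
  fix g a assume g: "g \<in> carrier G" and "a \<in> comm_set G c"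
  then obtain y where y: "y \<in> carrier G" "a = comm G y c" unfolding comm_set_def by auto
  have "g \<otimes> a \<otimes> inv g = comm G (y \<otimes> inv g) c \<otimes> inv (comm G (inv g) c)"
    using y g c by (simp add: comm_mult_left m_assoc)
  moreover have "comm G (y \<otimes> inv g) c \<in> comm_set G c" "comm G (inv g) c \<in> comm_set G c"
    using y g unfolding comm_set_def by auto
  ultimately show "g \<otimes> a \<otimes> inv g \<in> comm_set G c" by simp
qed

lemma generating_set_subset_carrier: "generate G S = carrier G \<Longrightarrow> S \<subseteq> carrier G"
  using generate.incl[of _ S G] by blast

lemma comm_right_mem_normal_of_generators:
  assumes W: "W \<lhd> G" and gen: "generate G S = carrier G" and a: "a \<in> carrier G"
    and S: "\<And>s. s \<in> S \<Longrightarrow> comm G a s \<in> W" and h: "h \<in> carrier G"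
  shows "comm G a h \<in> W"
proof -
  interpret W: normal W G by (rule W)
  have "subgroup {h \<in> carrier G. comm G a h \<in> W} G"
  proof (rule subgroupI)
    have "\<one> \<in> {h \<in> carrier G. comm G a h \<in> W}" using a W.one_closed by simp
    then show "{h \<in> carrier G. comm G a h \<in> W} \<noteq> {}" by blast
  next
    fix h assume "h \<in> {h \<in> carrier G. comm G a h \<in> W}"
    then show "inv h \<in> {h \<in> carrier G. comm G a h \<in> W}"
      using a by (simp add: comm_inv_right W.inv_op_closed2)
  next
    fix h y assume "h \<in> {h \<in> carrier G. comm G a h \<in> W}" "y \<in> {h \<in> carrier G. comm G a h \<in> W}"
    then show "h \<otimes> y \<in> {h \<in> carrier G. comm G a h \<in> W}"
      using a by (simp add: comm_mult_right W.inv_op_closed1)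
  qed auto
  moreover have "S \<subseteq> {h \<in> carrier G. comm G a h \<in> W}"
    using S generating_set_subset_carrier[OF gen] by auto
  ultimately show ?thesis
    using generate_subgroup_incl gen h by blast
qed

lemma comm_left_mem_normal_of_generators:
  assumes W: "W \<lhd> G" and gen: "generate G S = carrier G" and b: "b \<in> carrier G"
    and S: "\<And>s. s \<in> S \<Longrightarrow> comm G s b \<in> W" and g: "g \<in> carrier G"
  shows "comm G g b \<in> W"
proof -
  interpret W: normal W G by (rule W)
  have S_carrier: "S \<subseteq> carrier G" by (rule generating_set_subset_carrier[OF gen])
  have "comm G b s \<in> W" if "s \<in> S" for s
  proof -
    have "inv (comm G s b) \<in> W" using S[OF that] by (rule W.m_inv_closed)
    then show ?thesis using that S_carrier b by (simp add: inv_comm subset_iff)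
  qed
  then have "comm G b g \<in> W"
    by (rule comm_right_mem_normal_of_generators[OF W gen b _ g])
  then have "inv (comm G b g) \<in> W" by (rule W.m_inv_closed)
  then show ?thesis using b g by (simp add: inv_comm)
qed

lemma comm_mem_normal_of_generators:
  assumes W: "W \<lhd> G" and gen: "generate G S = carrier G"
    and S: "\<And>s t. s \<in> S \<Longrightarrow> t \<in> S \<Longrightarrow> comm G s t \<in> W"
    and g: "g \<in> carrier G" and h: "h \<in> carrier G"
  shows "comm G g h \<in> W"
proof (rule comm_left_mem_normal_of_generators[OF W gen h _ g])
  fix s assume "s \<in> S"
  show "comm G s h \<in> W"
  proof (rule comm_right_mem_normal_of_generators[OF W gen _ _ h])
    show "s \<in> carrier G" using \<open>s \<in> S\<close> generating_set_subset_carrier[OF gen] by auto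
    show "\<And>t. t \<in> S \<Longrightarrow> comm G s t \<in> W" using S[OF \<open>s \<in> S\<close>] .
  qed
qed

lemma comm_mem_normal_of_indexed_generators:
  fixes x :: "'i::linorder \<Rightarrow> 'a"
  assumes W: "W \<lhd> G" and gen: "generate G (x ` I) = carrier G"
    and x: "\<And>i j. i \<in> I \<Longrightarrow> j \<in> I \<Longrightarrow> i < j \<Longrightarrow> comm G (x i) (x j) \<in> W"
    and g: "g \<in> carrier G" and h: "h \<in> carrier G"
  shows "comm G g h \<in> W"
proof (rule comm_mem_normal_of_generators[OF W gen _ g h])
  interpret W: normal W G by (rule W)
  have "comm G (x i) (x j) \<in> W" if ij: "i \<in> I" "j \<in> I" for i j
  proof -
    have carrier: "x i \<in> carrier G" "x j \<in> carrier G"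
      using ij generating_set_subset_carrier[OF gen] by auto
    consider "i < j" | "i = j" | "j < i" by (rule linorder_cases[of i j])
    then show ?thesis
    proof cases
      case 1
      with ij show ?thesis by (rule x)
    next
      case 2
      then show ?thesis using carrier W.one_closed by simp
    next
      case 3
      with ij have "inv (comm G (x j) (x i)) \<in> W" by (intro W.m_inv_closed x)
      then show ?thesis using carrier by (simp add: inv_comm)
    qed
  qed
  then show "comm G s t \<in> W" if "s \<in> x ` I" "t \<in> x ` I" for s t
    using that by blast
qed

lemma upper_central_series_mod_normal:
  assumes M: "M \<lhd> G"
  shows "upper_central_series_mod G M m \<lhd> G"
proof (induction m)
  case 0
  then show ?case using M by simp
next
  case (Suc m)
  let ?Z = "upper_central_series_mod G M m"
  interpret Z: normal ?Z G by (rule Suc.IH)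
  show ?case
  proof (rule normal_subgroupI)
    fix a b assume "a \<in> upper_central_series_mod G M (Suc m)" "b \<in> upper_central_series_mod G M (Suc m)"
    then have a: "a \<in> carrier G" "\<And>h. h \<in> carrier G \<Longrightarrow> comm G a h \<in> ?Z"
      and b: "b \<in> carrier G" "\<And>h. h \<in> carrier G \<Longrightarrow> comm G b h \<in> ?Z" by auto
    have "comm G (a \<otimes> b) h \<in> ?Z" if h: "h \<in> carrier G" for h
      unfolding comm_mult_left[OF a(1) b(1) h]
      using Z.inv_op_closed1[OF b(1) a(2)[OF h]] b(2)[OF h] by simp
    then show "a \<otimes> b \<in> upper_central_series_mod G M (Suc m)" using a b by simp
  next
    fix a assume "a \<in> upper_central_series_mod G M (Suc m)"
    then have a: "a \<in> carrier G" "\<And>h. h \<in> carrier G \<Longrightarrow> comm G a h \<in> ?Z" by auto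
    have "comm G (inv a) h \<in> ?Z" if h: "h \<in> carrier G" for h
      unfolding comm_inv_left[OF a(1) h] using Z.inv_op_closed2 a h by simp
    then show "inv a \<in> upper_central_series_mod G M (Suc m)" using a by simp
  next
    fix g a assume g: "g \<in> carrier G" and "a \<in> upper_central_series_mod G M (Suc m)"
    then have a: "a \<in> carrier G" "\<And>h. h \<in> carrier G \<Longrightarrow> comm G a h \<in> ?Z" by auto
    have "comm G (g \<otimes> a \<otimes> inv g) h \<in> ?Z" if h: "h \<in> carrier G" for h
      unfolding comm_conj_left[OF a(1) g h] using Z.inv_op_closed2 a g h by simp
    then show "g \<otimes> a \<otimes> inv g \<in> upper_central_series_mod G M (Suc m)" using a g by simp
  qed (use Z.one_closed in simp_all)
qed

lemma finite_product_normal_subgroups: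
  assumes "finite I" and "\<And>i. i \<in> I \<Longrightarrow> N i \<lhd> G"
  shows "\<exists>M. M \<lhd> G \<and> (\<forall>i \<in> I. N i \<subseteq> M) \<and>
    (\<forall>z \<in> M. \<exists>xs. length xs \<le> card I \<and> set xs \<subseteq> (\<Union>i \<in> I. N i) \<and> z = foldr (\<otimes>) xs \<one>)"
  using assms
proof (induction I rule: finite_induct)
  case empty
  have "{\<one>} \<lhd> G"
    by (rule normal_subgroupI) simp_all
  then show ?case by (intro exI[of _ "{\<one>}"]) auto
next
  case (insert i I)
  then obtain M where M: "M \<lhd> G" "\<forall>j \<in> I. N j \<subseteq> M"
    and M_products: "\<forall>z \<in> M. \<exists>xs. length xs \<le> card I \<and> set xs \<subseteq> (\<Union>j \<in> I. N j) \<and> z = foldr (\<otimes>) xs \<one>"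
    by auto
  have Ni: "N i \<lhd> G" by (rule insert.prems) simp
  interpret M: normal M G by (rule M(1))
  interpret Ni: normal "N i" G by (rule Ni)
  have "N i <#> M \<lhd> G"
    by (rule normal_subgroup_set_mult_closed[OF Ni M(1)])
  moreover have "N i \<subseteq> N i <#> M"
  proof
    fix a assume "a \<in> N i"
    then have "a = a \<otimes> \<one>" by simp
    then show "a \<in> N i <#> M" using \<open>a \<in> N i\<close> M.one_closed unfolding set_mult_def by blast
  qed
  moreover have "M \<subseteq> N i <#> M"
  proof
    fix m assume "m \<in> M"
    then have "m = \<one> \<otimes> m" by simp
    then show "m \<in> N i <#> M" using \<open>m \<in> M\<close> Ni.one_closed unfolding set_mult_def by blast
  qed
  moreover have "\<exists>xs. length xs \<le> card (insert i I) \<and> set xs \<subseteq> (\<Union>j \<in> insert i I. N j)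
      \<and> z = foldr (\<otimes>) xs \<one>" if z: "z \<in> N i <#> M" for z
  proof -
    obtain a m where am: "z = a \<otimes> m" "a \<in> N i" "m \<in> M"
      using z unfolding set_mult_def by blast
    obtain xs where xs: "length xs \<le> card I" "set xs \<subseteq> (\<Union>j \<in> I. N j)" "m = foldr (\<otimes>) xs \<one>"
      using M_products am(3) by blast
    have "length (a # xs) \<le> card (insert i I)" using xs(1) insert.hyps by simp
    moreover have "set (a # xs) \<subseteq> (\<Union>j \<in> insert i I. N j)" using xs(2) am(2) by auto
    moreover have "z = foldr (\<otimes>) (a # xs) \<one>" using xs(3) am(1) by simp
    ultimately show ?thesis by blast
  qed
  ultimately show ?case using M(2) by (intro exI[of _ "N i <#> M"]) blast
qed

lemma width_le_of_products:
  assumes M: "subgroup M G" and SM: "S \<subseteq> M"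
    and products: "\<And>z. z \<in> M \<Longrightarrow> \<exists>xs. length xs \<le> B \<and> set xs \<subseteq> S \<union> (\<lambda>y. inv y) ` S \<and> z = foldr (\<otimes>) xs \<one>"
  shows "width G S \<le> enat B"
  unfolding width_def
proof (rule SUP_least)
  fix z assume "z \<in> generate G S"
  then have "z \<in> M" using generate_subgroup_incl[OF SM M] by auto
  then obtain xs where xs: "length xs \<le> B" "set xs \<subseteq> S \<union> (\<lambda>y. inv y) ` S" "z = foldr (\<otimes>) xs \<one>"
    using products by blast
  then have "word_length G S z \<le> length xs"
    unfolding word_length_def by (intro Least_le) auto
  then show "enat (word_length G S z) \<le> enat B" using xs by simp
qed

lemma gamma_val_closed: "(\<And>i. i < k \<Longrightarrow> g i \<in> carrier G) \<Longrightarrow> gamma_val G k g \<in> carrier G"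
proof (induction k)
  case (Suc k)
  then show ?case by (cases k) simp_all
qed simp

lemma gamma_values_subset_carrier: "gamma_values G k \<subseteq> carrier G"
  unfolding gamma_values_def using gamma_val_closed by blast

lemma gamma_list_mem_gamma_values:
  "set as \<subseteq> carrier G \<Longrightarrow> gamma_list G as \<in> gamma_values G (length as)"
  unfolding gamma_list_def gamma_values_def by (intro CollectI exI[of _ "(!) as"]) auto

lemma comm_set_subset_inv_gamma_values:
  assumes "c \<in> gamma_values G (Suc k)"
  shows "comm_set G c \<subseteq> (\<lambda>y. inv y) ` gamma_values G (Suc (Suc k))"
proof
  fix z assume "z \<in> comm_set G c"
  then obtain y where y: "y \<in> carrier G" "z = comm G y c" unfolding comm_set_def by blast
  obtain g where g: "c = gamma_val G (Suc k) g" "\<forall>i < Suc k. g i \<in> carrier G"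
    using assms unfolding gamma_values_def by blast
  have "comm G c y = gamma_val G (Suc (Suc k)) (g(Suc k := y))"
    unfolding g(1) by (rule gamma_val_upd_last[symmetric])
  moreover have "gamma_val G (Suc (Suc k)) (g(Suc k := y)) \<in> gamma_values G (Suc (Suc k))"
    using g(2) y(1) unfolding gamma_values_def by (intro CollectI exI[of _ "g(Suc k := y)"]) auto
  moreover have "z = inv (comm G c y)"
    using y assms gamma_values_subset_carrier[of "Suc k"] by (simp add: inv_comm subset_iff)
  ultimately show "z \<in> (\<lambda>y. inv y) ` gamma_values G (Suc (Suc k))" by simp
qed

lemma gamma_values_subset_upper_central_series_mod:
  assumes "\<And>a b. a \<in> carrier G \<Longrightarrow> b \<in> carrier G \<Longrightarrow> comm G a b \<in> upper_central_series_mod G M (t + m)"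
  shows "gamma_values G (t + 2) \<subseteq> upper_central_series_mod G M m"
  using assms
proof (induction t arbitrary: m)
  case 0
  then show ?case by (auto simp: gamma_values_def numeral_2_eq_2)
next
  case (Suc t)
  have "gamma_val G (Suc (Suc t) + 1) g \<in> upper_central_series_mod G M m"
    if g: "\<forall>i < Suc t + 2. g i \<in> carrier G" for g
  proof -
    have "gamma_val G (t + 2) g \<in> gamma_values G (t + 2)"
      using g unfolding gamma_values_def by auto
    then have "gamma_val G (t + 2) g \<in> upper_central_series_mod G M (Suc m)"
      using Suc.IH[of "Suc m"] Suc.prems by auto
    then show ?thesis using g by (simp add: numeral_2_eq_2)
  qed
  then show ?case unfolding gamma_values_def by (auto simp: numeral_2_eq_2)
qed

lemma gamma_list_mem_upper_central_series_mod:
  assumes M: "M \<lhd> G" and gen: "generate G S = carrier G"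
    and ps: "ps \<noteq> []" "set ps \<subseteq> carrier G"
    and extensions: "\<And>ts. set ts \<subseteq> S \<Longrightarrow> length ts = d \<Longrightarrow>
      gamma_list G (ps @ ts) \<in> upper_central_series_mod G M 1"
  shows "gamma_list G ps \<in> upper_central_series_mod G M (Suc d)"
  using ps extensions
proof (induction d arbitrary: ps)
  case 0
  then show ?case by simp
next
  case (Suc d)
  let ?Z = "upper_central_series_mod G M (Suc d)"
  have S: "S \<subseteq> carrier G" by (rule generating_set_subset_carrier[OF gen])
  have ps_closed: "gamma_list G ps \<in> carrier G"
    using gamma_list_mem_gamma_values[OF Suc.prems(2)] gamma_values_subset_carrier by blast
  have "comm G (gamma_list G ps) s \<in> ?Z" if s: "s \<in> S" for s
  proof -
    have "gamma_list G (ps @ [s]) \<in> ?Z"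
    proof (rule Suc.IH)
      show "set (ps @ [s]) \<subseteq> carrier G" using Suc.prems(2) s S by auto
      show "gamma_list G ((ps @ [s]) @ ts) \<in> upper_central_series_mod G M 1"
        if "set ts \<subseteq> S" "length ts = d" for ts
        using Suc.prems(3)[of "s # ts"] that s by simp
    qed simp
    then show ?thesis by (simp add: gamma_list_snoc[OF Suc.prems(1)])
  qed
  then have "comm G (gamma_list G ps) h \<in> ?Z" if "h \<in> carrier G" for h
    using comm_right_mem_normal_of_generators[OF upper_central_series_mod_normal[OF M] gen ps_closed _ that]
    by blast
  then show ?case using ps_closed by simp
qed

lemma width_gamma_values_le_card:
  assumes comm_sets: "\<And>g. g \<in> carrier G \<Longrightarrow> subgroup (comm_set G g) G"
    and C: "finite C" "C \<subseteq> gamma_values G (Suc k)"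
    and covers: "\<And>M. M \<lhd> G \<Longrightarrow> (\<forall>c \<in> C. comm_set G c \<subseteq> M) \<Longrightarrow> gamma_values G (Suc (Suc k)) \<subseteq> M"
  shows "width G (gamma_values G (Suc (Suc k))) \<le> enat (card C)"
proof -
  have C_closed: "C \<subseteq> carrier G" using C(2) gamma_values_subset_carrier by blast
  obtain M where M: "M \<lhd> G" "\<forall>c \<in> C. comm_set G c \<subseteq> M"
    and products: "\<forall>z \<in> M. \<exists>xs. length xs \<le> card C \<and> set xs \<subseteq> (\<Union>c \<in> C. comm_set G c)
      \<and> z = foldr (\<otimes>) xs \<one>"
  proof -
    have "comm_set G c \<lhd> G" if "c \<in> C" for c
      using that C_closed by (intro comm_set_normal comm_sets) auto
    then show thesis using finite_product_normal_subgroups[OF C(1), of "comm_set G"] that by blast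
  qed
  have "(\<Union>c \<in> C. comm_set G c) \<subseteq> (\<lambda>y. inv y) ` gamma_values G (Suc (Suc k))"
    using comm_set_subset_inv_gamma_values C(2) by blast
  then have "set xs \<subseteq> gamma_values G (Suc (Suc k)) \<union> (\<lambda>y. inv y) ` gamma_values G (Suc (Suc k))"
    if "set xs \<subseteq> (\<Union>c \<in> C. comm_set G c)" for xs
    using that by blast
  then show ?thesis
    using products by (intro width_le_of_products[OF normal_imp_subgroup[OF M(1)] covers[OF M]]) metis
qed

lemma mem_upper_central_series_mod_1:
  assumes M: "M \<lhd> G" and c: "c \<in> carrier G" "comm_set G c \<subseteq> M"
  shows "c \<in> upper_central_series_mod G M 1"
proof -
  interpret M: normal M G by (rule M)
  have "comm G c h \<in> M" if h: "h \<in> carrier G" for h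
  proof -
    have "comm G h c \<in> M" using c(2) h unfolding comm_set_def by blast
    then have "inv (comm G h c) \<in> M" by (rule M.m_inv_closed)
    then show ?thesis using h c(1) by (simp add: inv_comm)
  qed
  then show ?thesis using c(1) by simp
qed

lemma gamma2_values_subset_normal:
  fixes x :: "nat \<Rightarrow> 'a"
  assumes M: "M \<lhd> G" and gen: "generate G (x ` {..<n}) = carrier G"
    and comm_sets: "\<And>i. i < n - 1 \<Longrightarrow> comm_set G (x i) \<subseteq> M"
  shows "gamma_values G 2 \<subseteq> M"
proof -
  have x_closed: "x ` {..<n} \<subseteq> carrier G"
    by (rule generating_set_subset_carrier[OF gen])
  have "comm G (x i) (x j) \<in> upper_central_series_mod G M 0"
    if ij: "i \<in> {..<n}" "j \<in> {..<n}" "i < j" for i j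
  proof -
    have "x i \<in> upper_central_series_mod G M 1"
      using ij x_closed by (intro mem_upper_central_series_mod_1[OF M] comm_sets) auto
    then show ?thesis using ij x_closed by auto
  qed
  then have "comm G a b \<in> upper_central_series_mod G M (0 + 0)"
    if "a \<in> carrier G" "b \<in> carrier G" for a b
    using comm_mem_normal_of_indexed_generators[OF M gen _ that] by simp
  then show ?thesis
    using gamma_values_subset_upper_central_series_mod[of M 0 0] by (simp add: numeral_2_eq_2)
qed

lemma gamma_values_subset_normal:
  fixes x :: "nat \<Rightarrow> 'a"
  assumes M: "M \<lhd> G" and gen: "generate G (x ` {..<n}) = carrier G"
    and comm_sets: "\<And>i j ls. i < j \<Longrightarrow> j < n \<Longrightarrow> set ls \<subseteq> {..<n} \<Longrightarrow> length ls = d \<Longrightarrow>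
      comm_set G (gamma_list G (x i # x j # map x ls)) \<subseteq> M"
  shows "gamma_values G (d + 3) \<subseteq> M"
proof -
  have x_closed: "x ` {..<n} \<subseteq> carrier G"
    by (rule generating_set_subset_carrier[OF gen])
  have "comm G (x i) (x j) \<in> upper_central_series_mod G M (Suc d)"
    if ij: "i \<in> {..<n}" "j \<in> {..<n}" "i < j" for i j
  proof -
    have "gamma_list G [x i, x j] \<in> upper_central_series_mod G M (Suc d)"
    proof (rule gamma_list_mem_upper_central_series_mod[OF M gen])
      show "set [x i, x j] \<subseteq> carrier G" using ij x_closed by auto
      fix ts assume ts: "set ts \<subseteq> x ` {..<n}" "length ts = d"
      then have "ts \<in> lists (x ` {..<n})" by auto
      then obtain ls where ls: "set ls \<subseteq> {..<n}" "ts = map x ls"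
        unfolding lists_image by blast
      have "set ([x i, x j] @ ts) \<subseteq> carrier G" using ij ts(1) x_closed by auto
      then have "gamma_list G ([x i, x j] @ ts) \<in> carrier G"
        using gamma_list_mem_gamma_values gamma_values_subset_carrier by blast
      moreover have "comm_set G (gamma_list G ([x i, x j] @ ts)) \<subseteq> M"
        using comm_sets[of i j ls] ij ls ts(2) by simp
      ultimately show "gamma_list G ([x i, x j] @ ts) \<in> upper_central_series_mod G M 1"
        by (rule mem_upper_central_series_mod_1[OF M])
    qed simp
    then show ?thesis by simp
  qed
  then have "comm G a b \<in> upper_central_series_mod G M (Suc d)"
    if "a \<in> carrier G" "b \<in> carrier G" for a b
    by (rule comm_mem_normal_of_indexed_generators[OF upper_central_series_mod_normal[OF M] gen _ that])
  then have "gamma_values G (Suc d + 2) \<subseteq> upper_central_series_mod G M 0"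
    by (intro gamma_values_subset_upper_central_series_mod) (simp only: add_0_right)
  then show ?thesis by (simp add: numeral_3_eq_3 numeral_2_eq_2)
qed

lemma width_gamma2_le:
  fixes x :: "nat \<Rightarrow> 'a"
  assumes comm_sets: "\<And>g. g \<in> carrier G \<Longrightarrow> subgroup (comm_set G g) G"
    and gen: "generate G (x ` {..<n}) = carrier G"
  shows "width G (gamma_values G 2) \<le> enat (n - 1)"
proof -
  have "x ` {..<n - 1} \<subseteq> gamma_values G (Suc 0)"
    using generating_set_subset_carrier[OF gen] unfolding gamma_values_def
    by (auto intro!: exI[of _ "\<lambda>_. x _"])
  then have "width G (gamma_values G (Suc (Suc 0))) \<le> enat (card (x ` {..<n - 1}))"
    using gamma2_values_subset_normal[OF _ gen]
    by (intro width_gamma_values_le_card[OF comm_sets]) (auto simp: numeral_2_eq_2)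
  also have "\<dots> \<le> enat (n - 1)"
    using card_image_le[of "{..<n - 1}" x] by simp
  finally show ?thesis by (simp add: numeral_2_eq_2)
qed

lemma width_gamma_le:
  fixes x :: "nat \<Rightarrow> 'a"
  assumes comm_sets: "\<And>g. g \<in> carrier G \<Longrightarrow> subgroup (comm_set G g) G"
    and gen: "generate G (x ` {..<n}) = carrier G"
  shows "width G (gamma_values G (d + 3)) \<le> enat (n ^ (d + 1) * (n - 1) div 2)"
proof -
  define I where "I = {(i, j). i < j \<and> j < n} \<times> {ls. set ls \<subseteq> {..<n} \<and> length ls = d}"
  define C where "C = (\<lambda>((i, j), ls). gamma_list G (x i # x j # map x ls)) ` I"
  have finite: "finite I"
    unfolding I_def
    by (intro finite_cartesian_product finite_lists_length_eq finite_subset[of _ "{..<n} \<times> {..<n}"]) auto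
  have "gamma_list G (x i # x j # map x ls) \<in> gamma_values G (Suc (Suc d))"
    if "i < n" "j < n" "set ls \<subseteq> {..<n}" "length ls = d" for i j ls
    using gamma_list_mem_gamma_values[of "x i # x j # map x ls"] that
      generating_set_subset_carrier[OF gen] by auto
  then have "C \<subseteq> gamma_values G (Suc (Suc d))"
    unfolding C_def I_def by force
  then have "width G (gamma_values G (Suc (Suc (Suc d)))) \<le> enat (card C)"
    using gamma_values_subset_normal[OF _ gen, of _ d] finite
    by (intro width_gamma_values_le_card[OF comm_sets]) (auto simp: C_def I_def numeral_3_eq_3)
  also have "\<dots> \<le> enat (card I)"
    unfolding C_def using card_image_le finite by simp
  finally show ?thesis
    by (simp add: I_def card_ordered_pairs_times_lists numeral_3_eq_3)
qed

end

theorem corollary1: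
  fixes G (structure) and n :: nat and x :: "nat \<Rightarrow> 'a"
  assumes "group G"
    and "x ` {..<n} \<subseteq> carrier G"
    and "generate G (x ` {..<n}) = carrier G"
    and "\<And>g. g \<in> carrier G \<Longrightarrow> subgroup (comm_set G g) G"
  shows "width G (gamma_values G 2) \<le> enat (n - 1) \<and>
     (\<forall>k\<ge>3. width G (gamma_values G k) \<le> enat (n ^ (k - 2) * (n - 1) div 2))"
proof -
  interpret group G by (rule assms(1))
  have "width G (gamma_values G k) \<le> enat (n ^ (k - 2) * (n - 1) div 2)" if "k \<ge> 3" for k
  proof -
    have "k = (k - 3) + 3" "k - 2 = (k - 3) + 1" using that by simp_all
    then show ?thesis using width_gamma_le[OF assms(4,3), of "k - 3"] by metis
  qed
  then show ?thesis using width_gamma2_le[OF assms(4,3)] by blast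
qed

end
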